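(* Let $\nu\ge 1$ be an integer and let $\widetilde{L}_\nu(t)=\left.\left(\frac{d}{du}\right)^{\nu}(u^2-1)^{\nu}\right|_{u=2t-1}$, a polynomial in $t$ of degree $\nu$. Among all $(2\nu)$-indistinguishable finite bias distributions, there is a unique one with the minimal number of possible output values, namely the distribution $\mathcal{P}_{2\nu}$ whose possible outputs are the zeroes $p$ of $\widetilde{L}_\nu$, each output $p$ being taken with probability $\frac{C}{(p(1-p))^{3/2}\,\widetilde{L}_\nu{}'(p)^2}$, where $C>0$ is the normalizing constant making the probabilities sum to $1$. This distribution has exactly $\nu$ possible outputs.
   Context: A finite bias distribution is a probability distribution $\mathcal{P}$ supported on a finite subset of the open interval $(0,1)$ that is symmetric: for every $a$, $\mathcal{P}$ outputs $a$ and $1-a$ with the same probability. $E_p$ denotes expectation over $p$ drawn from $\mathcal{P}$. For $0<p<1$ put $\sigma(p)=\sqrt{(1-p)/p}$, and for integers $\ell\ge 1$, $0\le x\le\ell$ put $f_{\ell,x}(p)=p^x(1-p)^{\ell-x}\bigl(x\sigma(p)-(\ell-x)\sigma(1-p)\bigr)$ and $R_{\ell,x}=\max\{0,E_p[f_{\ell,x}(p)]\}$. For a positive integer $c$, $\mathcal{P}$ is called $c$-indistinguishable if $\sum_{x=1}^{\ell-1}\binom{\ell}{x}R_{\ell,x}=0$ for all $2\le\ell\le c$. "Number of possible outputs" means the size of the support of the distribution. *)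

theory Defs
  imports "HOL-Probability.Probability" "HOL-Computational_Algebra.Polynomial"
begin

definition finite_bias_distribution :: "real pmf \<Rightarrow> bool" where
  "finite_bias_distribution P \<longleftrightarrow>
     finite (set_pmf P) \<and> set_pmf P \<subseteq> {0<..<1} \<and> (\<forall>a. pmf P a = pmf P (1 - a))"

definition sigma_b :: "real \<Rightarrow> real" where
  "sigma_b p = sqrt ((1 - p) / p)"

definition f_bias :: "nat \<Rightarrow> nat \<Rightarrow> real \<Rightarrow> real" where
  "f_bias l x p = p ^ x * (1 - p) ^ (l - x) *
      (real x * sigma_b p - real (l - x) * sigma_b (1 - p))"

definition R_bias :: "real pmf \<Rightarrow> nat \<Rightarrow> nat \<Rightarrow> real" where
  "R_bias P l x = max 0 (measure_pmf.expectation P (f_bias l x))"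

definition indistinguishable :: "nat \<Rightarrow> real pmf \<Rightarrow> bool" where
  "indistinguishable c P \<longleftrightarrow>
     (\<forall>l. 2 \<le> l \<and> l \<le> c \<longrightarrow>
        (\<Sum>x = 1..l - 1. real (l choose x) * R_bias P l x) = 0)"

definition shifted_legendre :: "nat \<Rightarrow> real poly" where
  "shifted_legendre \<nu> = pcompose ((pderiv ^^ \<nu>) ([:-1, 0, 1:] ^ \<nu>)) [:-1, 2:]"

definition minimal_indist :: "nat \<Rightarrow> real pmf \<Rightarrow> bool" where
  "minimal_indist c P \<longleftrightarrow> finite_bias_distribution P \<and> indistinguishable c P \<and>
     (\<forall>Q. finite_bias_distribution Q \<and> indistinguishable c Q \<longrightarrow>
          card (set_pmf P) \<le> card (set_pmf Q))"

end

theory Submission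
  imports Defs
begin

(* Write mu(a) = P(a) * sqrt (a (1 - a)).  Since
     f_{l,x}(p) = sqrt (p (1 - p)) * d/dp [p^x (1 - p)^(l - x)]
   and P is symmetric, 2 nu-indistinguishability says exactly that a positive multiple of mu,
   placed on the support of P, is a quadrature rule on [0,1] that integrates every polynomial
   of degree < 2 nu exactly: the tests f_{k+2,k+1} pin down the moments, and conversely
   p^x (1 - p)^(l - x) vanishes at 0 and 1 for 0 < x < l.  Such a rule needs at least nu nodes,
   and a rule with exactly nu nodes is the Gauss-Legendre rule: its nodes are the zeros of the
   degree nu orthogonal polynomial on [0,1], the shifted Legendre polynomial L, and its weights
   are forced to be L(0)^2 / (t (1 - t) L'(t)^2).  Dividing by sqrt (t (1 - t)) gives the masses
   of P_{2 nu}, which are symmetric because L is (anti)symmetric under t -> 1 - t. *)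

section \<open>Integrals of polynomials over [0,1]\<close>

definition integral01 :: "real poly \<Rightarrow> real" where
  "integral01 p = integral {0..1} (poly p)"

lemma poly_integrable_on_01 [simp]: "poly p integrable_on {0..1::real}"
  by (rule integrable_continuous_real) (auto intro!: continuous_intros)

lemma integral01_pderiv: "integral01 (pderiv p) = poly p 1 - poly p 0"
proof -
  have "(poly (pderiv p) has_integral (poly p 1 - poly p 0)) {0..1}"
    by (rule fundamental_theorem_of_calculus)
       (auto simp: has_real_derivative_iff_has_vector_derivative[symmetric]
             intro!: poly_DERIV has_field_derivative_at_within)
  then show ?thesis
    unfolding integral01_def by (rule integral_unique)
qed

lemma integral01_add: "integral01 (p + q) = integral01 p + integral01 q"
  unfolding integral01_def poly_add[abs_def] by (simp add: integral_add)

lemma integral01_diff: "integral01 (p - q) = integral01 p - integral01 q"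
  unfolding integral01_def poly_diff[abs_def] by (simp add: integral_diff)

lemma integral01_smult: "integral01 (smult c p) = c * integral01 p"
  unfolding integral01_def poly_smult[abs_def] by simp

lemma integral01_0 [simp]: "integral01 0 = 0"
  unfolding integral01_def poly_0[abs_def] by simp

lemma integral01_sum: "integral01 (\<Sum>a\<in>A. f a) = (\<Sum>a\<in>A. integral01 (f a))"
  by (induction A rule: infinite_finite_induct) (simp_all add: integral01_add)

lemma integral01_monom: "integral01 (monom c k) = c / (real k + 1)"
proof -
  have "monom c k = pderiv (monom (c / (real k + 1)) (Suc k))"
    by (simp add: pderiv_monom add.commute)
  then show ?thesis
    by (simp add: integral01_pderiv poly_monom)
qed

lemma integral01_eq_sum_coeff: "integral01 p = (\<Sum>k\<le>degree p. coeff p k / (real k + 1))"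
proof -
  have "integral01 p = integral01 (\<Sum>k\<le>degree p. monom (coeff p k) k)"
    by (simp only: poly_as_sum_of_monoms)
  then show ?thesis
    by (simp add: integral01_sum integral01_monom)
qed

lemma integral01_square_pos:
  assumes "p \<noteq> 0"
  shows "integral01 (p * p) > 0"
proof -
  have "integral01 (p * p) \<ge> 0"
    unfolding integral01_def by (rule integral_nonneg) auto
  moreover have "integral01 (p * p) \<noteq> 0"
  proof
    assume "integral01 (p * p) = 0"
    then have "integral (cbox 0 1) (poly (p * p)) = 0"
      by (simp add: integral01_def)
    then have "\<forall>x\<in>cbox 0 (1::real). poly (p * p) x = 0"
      by (subst (asm) integral_cbox_eq_0_iff) (auto intro!: continuous_intros)
    then have "{0..1::real} \<subseteq> {x. poly p x = 0}"
      by auto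
    with poly_roots_finite[OF assms] have "finite {0..1::real}"
      by (rule finite_subset[rotated])
    then show False
      by (simp add: infinite_Icc)
  qed
  ultimately show ?thesis
    by linarith
qed

lemma integral01_by_parts:
  "integral01 (pderiv p * q) = poly p 1 * poly q 1 - poly p 0 * poly q 0 - integral01 (p * pderiv q)"
  using integral01_pderiv[of "p * q"] by (simp add: pderiv_mult integral01_add algebra_simps)

section \<open>Quadrature rules on [0,1]\<close>

definition quadrature_exact :: "nat \<Rightarrow> real set \<Rightarrow> (real \<Rightarrow> real) \<Rightarrow> bool" where
  "quadrature_exact n S w \<longleftrightarrow>
     (\<forall>s. degree s < 2 * n \<longrightarrow> (\<Sum>x\<in>S. w x * poly s x) = integral01 s)"

lemma quadrature_exactD:
  "quadrature_exact n S w \<Longrightarrow> degree s < 2 * n \<Longrightarrow> integral01 s = (\<Sum>x\<in>S. w x * poly s x)"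
  unfolding quadrature_exact_def by simp

lemma quadrature_exact_cong:
  "quadrature_exact n S w \<Longrightarrow> (\<And>x. x \<in> S \<Longrightarrow> w x = v x) \<Longrightarrow> quadrature_exact n S v"
  unfolding quadrature_exact_def by simp

lemma quadrature_exactI_moments:
  assumes "\<And>k. k < 2 * n \<Longrightarrow> (\<Sum>x\<in>S. w x * x ^ k) = 1 / (real k + 1)"
  shows "quadrature_exact n S w"
  unfolding quadrature_exact_def
proof (intro allI impI)
  fix s :: "real poly"
  assume s: "degree s < 2 * n"
  have "(\<Sum>x\<in>S. w x * poly s x) = (\<Sum>x\<in>S. \<Sum>k\<le>degree s. coeff s k * (w x * x ^ k))"
    by (simp add: poly_altdef sum_distrib_left algebra_simps)
  also have "\<dots> = (\<Sum>k\<le>degree s. coeff s k * (\<Sum>x\<in>S. w x * x ^ k))"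
    by (subst sum.swap) (simp add: sum_distrib_left)
  also have "\<dots> = (\<Sum>k\<le>degree s. coeff s k / (real k + 1))"
    using s by (intro sum.cong refl) (simp add: assms)
  also have "\<dots> = integral01 s"
    by (simp add: integral01_eq_sum_coeff)
  finally show "(\<Sum>x\<in>S. w x * poly s x) = integral01 s" .
qed

definition node_poly :: "real set \<Rightarrow> real poly" where
  "node_poly S = (\<Prod>x\<in>S. [:-x, 1:])"

lemma poly_node_poly_eq_0_iff: "finite S \<Longrightarrow> poly (node_poly S) x = 0 \<longleftrightarrow> x \<in> S"
  by (simp add: node_poly_def poly_prod)

lemma lead_coeff_node_poly: "lead_coeff (node_poly S) = 1"
  by (simp add: node_poly_def lead_coeff_prod)

lemma node_poly_nonzero: "node_poly S \<noteq> 0"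
  using lead_coeff_node_poly[of S] by auto

lemma degree_node_poly: "finite S \<Longrightarrow> degree (node_poly S) = card S"
  unfolding node_poly_def by (subst degree_prod_eq_sum_degree) auto

lemma quadrature_exact_imp_card_ge:
  assumes "finite S" "quadrature_exact n S w"
  shows "n \<le> card S"
proof (rule ccontr)
  assume "\<not> n \<le> card S"
  define v where "v = node_poly S * node_poly S"
  have "degree v < 2 * n"
    using \<open>\<not> n \<le> card S\<close> assms(1)
    by (simp add: v_def degree_mult_eq node_poly_nonzero degree_node_poly)
  then have "integral01 v = (\<Sum>x\<in>S. w x * poly v x)"
    by (rule quadrature_exactD[OF assms(2)])
  also have "\<dots> = 0"
    using assms(1) by (auto simp: v_def poly_node_poly_eq_0_iff intro!: sum.neutral)
  finally show False
    using integral01_square_pos[OF node_poly_nonzero[of S]] by (simp add: v_def)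
qed

lemma quadrature_exact_node_poly_orthogonal:
  assumes "finite S" "card S = n" "quadrature_exact n S w" "degree q < n"
  shows "integral01 (node_poly S * q) = 0"
proof -
  have "degree (node_poly S * q) < 2 * n"
    using degree_mult_le[of "node_poly S" q] degree_node_poly[OF assms(1)] assms(2,4) by linarith
  then have "integral01 (node_poly S * q) = (\<Sum>x\<in>S. w x * poly (node_poly S * q) x)"
    by (rule quadrature_exactD[OF assms(3)])
  also have "\<dots> = 0"
    using assms(1) by (auto simp: poly_node_poly_eq_0_iff intro!: sum.neutral)
  finally show ?thesis .
qed

section \<open>Gauss quadrature\<close>

locale orthogonal_poly01 =
  fixes L :: "real poly" and n :: nat
  assumes degree_L: "degree L = n"
    and card_roots: "card {x. poly L x = 0} = n"
    and roots_in_01: "{x. poly L x = 0} \<subseteq> {0<..<1}"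
    and orthogonal: "\<And>q. degree q < n \<Longrightarrow> integral01 (L * q) = 0"
begin

abbreviation roots :: "real set" where
  "roots \<equiv> {x. poly L x = 0}"

lemma L_nonzero: "L \<noteq> 0"
  using roots_in_01 by auto

lemma finite_roots: "finite roots"
  using L_nonzero by (rule poly_roots_finite)

lemma poly_L_0_nonzero: "poly L 0 \<noteq> 0"
  using roots_in_01 by auto

definition lagrange :: "real \<Rightarrow> real poly" where
  "lagrange t = L div [:-t, 1:]"

lemma L_eq_lagrange: "t \<in> roots \<Longrightarrow> L = [:-t, 1:] * lagrange t"
  unfolding lagrange_def by (rule dvd_mult_div_cancel[symmetric]) (simp add: poly_eq_0_iff_dvd)

lemma lagrange_nonzero: "t \<in> roots \<Longrightarrow> lagrange t \<noteq> 0"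
  using L_eq_lagrange L_nonzero by fastforce

lemma degree_lagrange:
  assumes "t \<in> roots"
  shows "degree (lagrange t) = n - 1"
proof -
  have "degree L = degree [:-t, 1:] + degree (lagrange t)"
    by (subst L_eq_lagrange[OF assms]) (rule degree_mult_eq, simp, rule lagrange_nonzero[OF assms])
  then show ?thesis
    using degree_L by simp
qed

lemma poly_lagrange_other:
  assumes "t \<in> roots" "u \<in> roots" "u \<noteq> t"
  shows "poly (lagrange t) u = 0"
proof -
  have "0 = poly L u"
    using assms(2) by simp
  also have "\<dots> = (u - t) * poly (lagrange t) u"
    by (subst L_eq_lagrange[OF assms(1)]) (simp add: algebra_simps)
  finally show ?thesis
    using assms(3) by simp
qed

lemma poly_lagrange_self:
  assumes "t \<in> roots"
  shows "poly (lagrange t) t = poly (pderiv L) t"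
proof -
  have "pderiv L = [:-t, 1:] * pderiv (lagrange t) + lagrange t * pderiv [:-t, 1:]"
    by (subst L_eq_lagrange[OF assms]) (rule pderiv_mult)
  then show ?thesis
    by (simp add: pderiv_pCons)
qed

lemma poly_pderiv_L_nonzero:
  assumes "t \<in> roots"
  shows "poly (pderiv L) t \<noteq> 0"
proof
  assume "poly (pderiv L) t = 0"
  then have "\<forall>u\<in>roots. poly (lagrange t) u = 0"
    using poly_lagrange_other[OF assms] poly_lagrange_self[OF assms] by auto
  moreover have "degree (lagrange t) < card roots"
    using degree_lagrange[OF assms] card_roots card_gt_0_iff[of roots] finite_roots assms by auto
  ultimately have "lagrange t = 0"
    by (intro poly_eqI_degree[of roots]) auto
  with lagrange_nonzero[OF assms] show False
    by contradiction
qed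

lemma lagrange_interpolation:
  assumes "degree r < n"
  shows "r = (\<Sum>t\<in>roots. smult (poly r t / poly (pderiv L) t) (lagrange t))"
proof (rule poly_eqI_degree[of roots])
  show "degree r < card roots"
    using assms card_roots by simp
next
  have "degree (\<Sum>t\<in>roots. smult (poly r t / poly (pderiv L) t) (lagrange t)) \<le> n - 1"
    by (rule degree_sum_le[OF finite_roots]) (metis degree_lagrange degree_smult_le order.trans mem_Collect_eq)
  then show "degree (\<Sum>t\<in>roots. smult (poly r t / poly (pderiv L) t) (lagrange t)) < card roots"
    using assms card_roots by linarith
next
  fix u assume u: "u \<in> roots"
  have "(\<Sum>t\<in>roots. poly r t / poly (pderiv L) t * poly (lagrange t) u) =
        poly r u / poly (pderiv L) u * poly (lagrange u) u"
    by (rule sum.remove[OF finite_roots u, THEN trans])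
       (auto intro!: sum.neutral simp: poly_lagrange_other[OF _ u])
  also have "\<dots> = poly r u"
    using poly_lagrange_self[OF u] poly_pderiv_L_nonzero[OF u] by simp
  finally show "poly r u = poly (\<Sum>t\<in>roots. smult (poly r t / poly (pderiv L) t) (lagrange t)) u"
    by (simp add: poly_sum)
qed

lemma degree_div_L_less:
  assumes "degree s < 2 * n"
  shows "degree (s div L) < n"
proof (cases "s div L = 0")
  case True
  then show ?thesis
    using assms by simp
next
  case False
  have "degree (s mod L) < n"
    using degree_mod_less[OF L_nonzero, of s] degree_L assms by auto
  moreover have "degree (s div L * L) = degree (s div L) + n"
    using False L_nonzero degree_L by (simp add: degree_mult_eq)
  ultimately have "degree s = degree (s div L) + n"
    using degree_add_eq_left[of "s mod L" "s div L * L"] by simp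
  then show ?thesis
    using assms by linarith
qed

definition gauss_weight :: "real \<Rightarrow> real" where
  "gauss_weight t = integral01 (lagrange t) / poly (pderiv L) t"

lemma quadrature_exact_gauss_weight: "quadrature_exact n roots gauss_weight"
  unfolding quadrature_exact_def
proof (intro allI impI)
  fix s :: "real poly"
  assume s: "degree s < 2 * n"
  define r where "r = s mod L"
  have "degree r < n"
    using degree_mod_less[OF L_nonzero, of s] degree_L s by (auto simp: r_def)
  have "integral01 s = integral01 (L * (s div L)) + integral01 r"
    unfolding integral01_add[symmetric] r_def by (simp only: mult_div_mod_eq)
  also have "\<dots> = integral01 r"
    using orthogonal[OF degree_div_L_less[OF s]] by simp
  also have "\<dots> = integral01 (\<Sum>t\<in>roots. smult (poly r t / poly (pderiv L) t) (lagrange t))"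
    by (rule arg_cong[where f = integral01, OF lagrange_interpolation[OF \<open>degree r < n\<close>]])
  also have "\<dots> = (\<Sum>t\<in>roots. gauss_weight t * poly r t)"
    unfolding integral01_sum integral01_smult gauss_weight_def by (simp add: mult.commute)
  also have "\<dots> = (\<Sum>t\<in>roots. gauss_weight t * poly s t)"
    by (intro sum.cong refl) (simp add: r_def poly_mod)
  finally show "(\<Sum>t\<in>roots. gauss_weight t * poly s t) = integral01 s"
    by (rule sym)
qed

lemma quadrature_weight_eq:
  assumes exact: "quadrature_exact n roots w" and t: "t \<in> roots"
  shows "w t * (poly (pderiv L) t)\<^sup>2 = (poly L 1)\<^sup>2 / (1 - t) + (poly L 0)\<^sup>2 / t"
proof -
  \<comment> \<open>Exactness on G' for G = (x - t) * lagrange t ^ 2: G' vanishes at the other roots and is L'(t)^2 at t.\<close>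
  define e where "e = lagrange t"
  define D where "D = pderiv L"
  define G where "G = [:-t, 1:] * e * e"
  have t01: "0 < t" "t < 1"
    using t roots_in_01 by auto
  have "0 < n"
    using t finite_roots card_roots card_gt_0_iff by blast
  have L_eq: "L = [:-t, 1:] * e"
    unfolding e_def by (rule L_eq_lagrange[OF t])
  have D_eq: "D = [:-t, 1:] * pderiv e + e"
    unfolding D_def L_eq pderiv_mult by (simp add: pderiv_pCons)
  have pderiv_G: "pderiv G = e * D + e * D - e * e"
    unfolding G_def D_eq pderiv_mult by (simp add: pderiv_pCons algebra_simps)
  have "degree G \<le> 1 + (n - 1) + (n - 1)"
    using degree_mult_le[of "[:-t, 1:] * e" e] degree_mult_le[of "[:-t, 1:]" e]
      degree_lagrange[OF t] by (simp add: G_def e_def)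
  then have "degree (pderiv G) < 2 * n"
    using \<open>0 < n\<close> by (simp add: degree_pderiv)
  then have "integral01 (pderiv G) = (\<Sum>u\<in>roots. w u * poly (pderiv G) u)"
    by (rule quadrature_exactD[OF exact])
  also have "\<dots> = w t * poly (pderiv G) t"
    by (rule sum.remove[OF finite_roots t, THEN trans])
       (auto intro!: sum.neutral simp: pderiv_G e_def poly_lagrange_other[OF t])
  also have "poly (pderiv G) t = (poly D t)\<^sup>2"
    using poly_lagrange_self[OF t]
    unfolding pderiv_G e_def[symmetric] D_def[symmetric] by (simp add: power2_eq_square)
  finally have weight: "w t * (poly D t)\<^sup>2 = (1 - t) * (poly e 1)\<^sup>2 + t * (poly e 0)\<^sup>2"
    unfolding integral01_pderiv G_def by (simp add: power2_eq_square algebra_simps)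
  have L_1: "poly L 1 = (1 - t) * poly e 1" and L_0: "poly L 0 = - t * poly e 0"
    by (subst L_eq, simp add: algebra_simps)+
  have "(poly L 1)\<^sup>2 / (1 - t) = (1 - t) * (poly e 1)\<^sup>2"
    unfolding L_1 using t01 by (simp add: power2_eq_square field_simps)
  moreover have "(poly L 0)\<^sup>2 / t = t * (poly e 0)\<^sup>2"
    unfolding L_0 using t01 by (simp add: power2_eq_square field_simps)
  ultimately show ?thesis
    using weight unfolding D_def by simp
qed

lemma quadrature_nodes_eq_roots:
  assumes "finite S" "card S = n" "quadrature_exact n S v"
  shows "S = roots"
proof -
  define c where "c = lead_coeff L"
  define r where "r = smult c (node_poly S) - L"
  have degree_S: "degree (node_poly S) = n"
    using assms(1,2) by (simp add: degree_node_poly)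
  \<comment> \<open>r has degree < n and is orthogonal to all polynomials of degree < n, so to itself.\<close>
  have "r = 0"
  proof (rule ccontr)
    assume "r \<noteq> 0"
    have "degree r \<le> n"
      using degree_diff_le_max[of "smult c (node_poly S)" L] degree_smult_le[of c "node_poly S"]
        degree_S degree_L by (simp add: r_def)
    moreover have "coeff r n = 0"
      using degree_S degree_L lead_coeff_node_poly[of S] by (simp add: r_def c_def)
    ultimately have "degree r < n"
      using \<open>r \<noteq> 0\<close> by (metis le_neq_implies_less leading_coeff_0_iff)
    have "r * r = (smult c (node_poly S) - L) * r"
      by (simp add: r_def[symmetric])
    also have "\<dots> = smult c (node_poly S * r) - L * r"
      by (simp add: algebra_simps)
    finally have "integral01 (r * r) = c * integral01 (node_poly S * r) - integral01 (L * r)"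
      by (simp add: integral01_diff integral01_smult)
    also have "\<dots> = 0"
      using quadrature_exact_node_poly_orthogonal[OF assms \<open>degree r < n\<close>] orthogonal[OF \<open>degree r < n\<close>]
      by simp
    finally show False
      using integral01_square_pos[OF \<open>r \<noteq> 0\<close>] by simp
  qed
  then have "L = smult c (node_poly S)"
    by (simp add: r_def)
  moreover have "c \<noteq> 0"
    using L_nonzero by (simp add: c_def)
  ultimately show ?thesis
    using poly_node_poly_eq_0_iff[OF assms(1)] by auto
qed

end

section \<open>Shifted Legendre polynomials\<close>

lemma pcompose_power: "pcompose (p ^ k) q = pcompose p q ^ k"
  by (induction k) (simp_all add: pcompose_mult pcompose_1)

lemma higher_pderiv_eq_0: "degree p < k \<Longrightarrow> (pderiv ^^ k) p = 0"
  by (rule poly_eqI) (simp add: coeff_higher_pderiv coeff_eq_0)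

lemma higher_pderiv_pcompose_linear:
  "(pderiv ^^ k) (pcompose p [:a, b:]) = smult (b ^ k) (pcompose ((pderiv ^^ k) p) [:a, b:])"
proof (induction k)
  case 0
  then show ?case
    by simp
next
  case (Suc k)
  then show ?case
    by (simp add: pderiv_smult pderiv_pcompose pderiv_pCons mult.commute)
qed

lemma power_dvd_pderiv:
  assumes "a ^ Suc k dvd p"
  shows "a ^ k dvd pderiv p"
proof -
  obtain r where p: "p = a ^ Suc k * r"
    using assms by (auto elim: dvdE)
  have "pderiv p = a ^ k * (a * pderiv r + smult (of_nat (Suc k)) (r * pderiv a))"
    unfolding p pderiv_mult pderiv_power_Suc by (simp add: algebra_simps)
  then show ?thesis
    by simp
qed

lemma power_dvd_higher_pderiv: "m \<le> n \<Longrightarrow> p ^ (n - m) dvd (pderiv ^^ m) (p ^ n)"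
proof (induction m)
  case 0
  then show ?case
    by simp
next
  case (Suc m)
  then have "p ^ Suc (n - Suc m) dvd (pderiv ^^ m) (p ^ n)"
    by (simp add: Suc_diff_Suc)
  then show ?case
    by (simp add: power_dvd_pderiv)
qed

definition rodrigues_poly :: "nat \<Rightarrow> real poly" where
  "rodrigues_poly n = (pderiv ^^ n) ([:0, -1, 1:] ^ n)"

lemma degree_rodrigues_poly: "degree (rodrigues_poly n) = n"
  unfolding rodrigues_poly_def by (simp add: degree_higher_pderiv degree_power_eq)

lemma rodrigues_poly_nonzero: "rodrigues_poly n \<noteq> 0"
  using degree_rodrigues_poly[of n] by (cases n) (auto simp: rodrigues_poly_def)

lemma higher_pderiv_rodrigues_vanishes_at_0_1:
  assumes "m < n"
  shows "poly ((pderiv ^^ m) ([:0, -1, 1::real:] ^ n)) 0 = 0"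
    and "poly ((pderiv ^^ m) ([:0, -1, 1::real:] ^ n)) 1 = 0"
proof -
  have "[:0, -1, 1:] ^ (n - m) dvd (pderiv ^^ m) ([:0, -1, 1::real:] ^ n)"
    using assms by (simp add: power_dvd_higher_pderiv)
  then obtain r where r: "(pderiv ^^ m) ([:0, -1, 1::real:] ^ n) = [:0, -1, 1:] ^ (n - m) * r"
    by (rule dvdE)
  show "poly ((pderiv ^^ m) ([:0, -1, 1::real:] ^ n)) 0 = 0"
    and "poly ((pderiv ^^ m) ([:0, -1, 1::real:] ^ n)) 1 = 0"
    unfolding r using assms by simp_all
qed

lemma integral01_rodrigues_poly_by_parts:
  assumes "j \<le> n"
  shows "integral01 (rodrigues_poly n * q) =
    (-1) ^ j * integral01 ((pderiv ^^ (n - j)) ([:0, -1, 1:] ^ n) * (pderiv ^^ j) q)"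
  using assms
proof (induction j)
  case 0
  then show ?case
    by (simp add: rodrigues_poly_def)
next
  case (Suc j)
  define a where "a = (pderiv ^^ (n - Suc j)) ([:0, -1, 1::real:] ^ n)"
  have "(pderiv ^^ (n - j)) ([:0, -1, 1:] ^ n) = pderiv a"
    using Suc.prems unfolding a_def by (metis Suc_diff_Suc Suc_le_lessD funpow.simps(2) o_apply)
  moreover have "poly a 0 = 0" "poly a 1 = 0"
    using higher_pderiv_rodrigues_vanishes_at_0_1[of "n - Suc j" n] Suc.prems by (simp_all add: a_def)
  ultimately show ?case
    using Suc by (simp add: integral01_by_parts a_def)
qed

lemma rodrigues_poly_orthogonal: "degree q < n \<Longrightarrow> integral01 (rodrigues_poly n * q) = 0"
  using integral01_rodrigues_poly_by_parts[of n n q] by (simp add: higher_pderiv_eq_0)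

lemma pderiv_roots_between:
  fixes p :: "real poly"
  assumes "finite S" "card S = Suc k" "\<forall>x\<in>S. poly p x = 0"
  shows "\<exists>T. finite T \<and> card T = k \<and> T \<subseteq> {Min S<..<Max S} \<and> (\<forall>x\<in>T. poly (pderiv p) x = 0)"
  using assms
proof (induction k arbitrary: S)
  case 0
  then show ?case
    by (intro exI[of _ "{}"]) auto
next
  case (Suc k)
  define S' where "S' = S - {Max S}"
  have "S \<noteq> {}"
    using Suc.prems by auto
  then have "Max S \<in> S"
    using Suc.prems by simp
  have "finite S'" "card S' = Suc k"
    using Suc.prems \<open>Max S \<in> S\<close> by (auto simp: S'_def)
  then have "S' \<noteq> {}"
    by auto
  obtain T' where T': "finite T'" "card T' = k" "T' \<subseteq> {Min S'<..<Max S'}" "\<forall>x\<in>T'. poly (pderiv p) x = 0"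
    using Suc.IH[OF \<open>finite S'\<close> \<open>card S' = Suc k\<close>] Suc.prems by (auto simp: S'_def)
  have "Max S' \<in> S'"
    using \<open>finite S'\<close> \<open>S' \<noteq> {}\<close> by simp
  then have "Max S' < Max S"
    using Suc.prems by (auto simp: S'_def less_le)
  moreover have "poly p (Max S') = poly p (Max S)"
    using Suc.prems \<open>Max S' \<in> S'\<close> \<open>Max S \<in> S\<close> by (auto simp: S'_def)
  moreover have "continuous_on {Max S'..Max S} (poly p)"
    by (auto intro!: continuous_intros)
  moreover have "\<And>x. poly p differentiable (at x)"
    by (rule differentiableI, rule has_field_derivative_imp_has_derivative, rule poly_DERIV)
  ultimately obtain z where z: "Max S' < z" "z < Max S" "DERIV (poly p) z :> 0"
    using Rolle[of "Max S'" "Max S" "poly p"] by blast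
  have "poly (pderiv p) z = 0"
    using DERIV_unique[OF z(3) poly_DERIV[of p z]] by simp
  moreover have "Min S \<le> Min S'"
    using \<open>S' \<noteq> {}\<close> Suc.prems by (intro Min_antimono) (auto simp: S'_def)
  moreover have "Min S' \<le> Max S'"
    using \<open>finite S'\<close> \<open>Max S' \<in> S'\<close> by (rule Min_le)
  moreover have "z \<notin> T'"
    using T'(3) z(1) by auto
  ultimately show ?case
    using T' z by (intro exI[of _ "insert z T'"]) auto
qed

lemma higher_pderiv_rodrigues_roots:
  assumes "m \<le> n"
  shows "\<exists>S. finite S \<and> card S = m \<and> S \<subseteq> {0<..<1} \<and>
    (\<forall>x\<in>S. poly ((pderiv ^^ m) ([:0, -1, 1::real:] ^ n)) x = 0)"
  using assms
proof (induction m)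
  case 0
  then show ?case
    by (intro exI[of _ "{}"]) auto
next
  case (Suc m)
  then obtain S where S: "finite S" "card S = m" "S \<subseteq> {0<..<1}"
    "\<forall>x\<in>S. poly ((pderiv ^^ m) ([:0, -1, 1::real:] ^ n)) x = 0"
    by auto
  define S' where "S' = insert 0 (insert 1 S)"
  have "0 \<notin> S" "1 \<notin> S"
    using S(3) by auto
  then have "finite S'" "card S' = Suc (Suc m)"
    using S(1,2) by (simp_all add: S'_def)
  moreover have "\<forall>x\<in>S'. poly ((pderiv ^^ m) ([:0, -1, 1::real:] ^ n)) x = 0"
    using S(4) higher_pderiv_rodrigues_vanishes_at_0_1[of m n] Suc.prems by (auto simp: S'_def)
  moreover have "Min S' = 0"
    using S(1,3) unfolding S'_def by (intro Min_eqI) auto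
  moreover have "Max S' = 1"
    using S(1,3) unfolding S'_def by (intro Max_eqI) auto
  ultimately obtain T where "finite T" "card T = Suc m" "T \<subseteq> {0<..<1}"
    "\<forall>x\<in>T. poly (pderiv ((pderiv ^^ m) ([:0, -1, 1::real:] ^ n))) x = 0"
    using pderiv_roots_between[of S' "Suc m" "(pderiv ^^ m) ([:0, -1, 1:] ^ n)"] by auto
  then show ?case
    by (intro exI[of _ T]) auto
qed

lemma rodrigues_poly_roots:
  "card {x. poly (rodrigues_poly n) x = 0} = n \<and> {x. poly (rodrigues_poly n) x = 0} \<subseteq> {0<..<1}"
proof -
  define R where "R = {x. poly (rodrigues_poly n) x = 0}"
  obtain S where S: "finite S" "card S = n" "S \<subseteq> {0<..<1}" "\<forall>x\<in>S. poly (rodrigues_poly n) x = 0"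
    using higher_pderiv_rodrigues_roots[of n n] unfolding rodrigues_poly_def by auto
  have "finite R"
    unfolding R_def using rodrigues_poly_nonzero by (rule poly_roots_finite)
  moreover have "S \<subseteq> R"
    using S(4) by (auto simp: R_def)
  moreover have "card R \<le> card S"
    using card_poly_roots_bound[OF rodrigues_poly_nonzero] degree_rodrigues_poly S(2) by (simp add: R_def)
  ultimately have "S = R"
    by (metis card_mono card_subset_eq le_antisym)
  then have "card R = n" "R \<subseteq> {0<..<1}"
    using S(2,3) by simp_all
  then show ?thesis
    by (simp add: R_def)
qed

lemma rodrigues_poly_reflect: "rodrigues_poly n = smult ((-1) ^ n) (pcompose (rodrigues_poly n) [:1, -1:])"
proof -
  have "pcompose [:0, -1, 1:] [:1, -1:] = [:0, -1, 1::real:]"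
    by (simp add: pcompose_pCons)
  then have "pcompose ([:0, -1, 1:] ^ n) [:1, -1:] = [:0, -1, 1::real:] ^ n"
    by (simp add: pcompose_power)
  then show ?thesis
    using higher_pderiv_pcompose_linear[of n "[:0, -1, 1::real:] ^ n" 1 "-1"] by (simp add: rodrigues_poly_def)
qed

lemma poly_rodrigues_poly_reflect:
  "poly (rodrigues_poly n) x = (-1) ^ n * poly (rodrigues_poly n) (1 - x)"
  by (subst rodrigues_poly_reflect) (simp add: poly_pcompose)

lemma poly_pderiv_rodrigues_poly_reflect:
  "poly (pderiv (rodrigues_poly n)) x = - ((-1) ^ n * poly (pderiv (rodrigues_poly n)) (1 - x))"
  by (subst rodrigues_poly_reflect) (simp add: pderiv_smult pderiv_pcompose pderiv_pCons poly_pcompose)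

lemma shifted_legendre_eq_rodrigues_poly: "shifted_legendre n = smult (2 ^ n) (rodrigues_poly n)"
proof -
  have square: "pcompose [:-1, 0, 1:] [:-1, 2:] = smult 4 [:0, -1, 1::real:]"
    by (simp add: pcompose_pCons)
  have "pcompose ([:-1, 0, 1:] ^ n) [:-1, 2:] = smult (4 ^ n) ([:0, -1, 1::real:] ^ n)"
    unfolding pcompose_power square smult_power ..
  then have "smult (2 ^ n) (shifted_legendre n) = smult (4 ^ n) (rodrigues_poly n)"
    using higher_pderiv_pcompose_linear[of n "[:-1, 0, 1::real:] ^ n" "-1" 2]
    by (simp add: shifted_legendre_def rodrigues_poly_def higher_pderiv_smult)
  moreover have "(4::real) ^ n = 2 ^ n * 2 ^ n"
    using power_mult_distrib[of "2::real" 2 n] by simp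
  ultimately have "smult (2 ^ n) (shifted_legendre n) = smult (2 ^ n) (smult (2 ^ n) (rodrigues_poly n))"
    by simp
  then show ?thesis
    by (rule smult_cancel[rotated]) simp
qed

lemma orthogonal_poly01_shifted_legendre: "orthogonal_poly01 (shifted_legendre n) n"
proof
  show "degree (shifted_legendre n) = n"
    by (simp add: shifted_legendre_eq_rodrigues_poly degree_rodrigues_poly)
  show "card {x. poly (shifted_legendre n) x = 0} = n"
    and "{x. poly (shifted_legendre n) x = 0} \<subseteq> {0<..<1}"
    using rodrigues_poly_roots[of n] by (simp_all add: shifted_legendre_eq_rodrigues_poly)
  show "integral01 (shifted_legendre n * q) = 0" if "degree q < n" for q
    using rodrigues_poly_orthogonal[OF that]
    by (simp add: shifted_legendre_eq_rodrigues_poly integral01_smult)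
qed

interpretation shifted_legendre: orthogonal_poly01 "shifted_legendre n" n for n
  by (rule orthogonal_poly01_shifted_legendre)

lemma shifted_legendre_root_reflect:
  "poly (shifted_legendre n) (1 - x) = 0 \<longleftrightarrow> poly (shifted_legendre n) x = 0"
  using poly_rodrigues_poly_reflect[of n x] by (simp add: shifted_legendre_eq_rodrigues_poly)

lemma shifted_legendre_sq_1_eq_sq_0: "(poly (shifted_legendre n) 1)\<^sup>2 = (poly (shifted_legendre n) 0)\<^sup>2"
  using poly_rodrigues_poly_reflect[of n 1]
  by (simp add: shifted_legendre_eq_rodrigues_poly power_mult_distrib flip: power_mult)

lemma pderiv_shifted_legendre_sq_reflect:
  "(poly (pderiv (shifted_legendre n)) (1 - x))\<^sup>2 = (poly (pderiv (shifted_legendre n)) x)\<^sup>2"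
  using poly_pderiv_rodrigues_poly_reflect[of n x]
  by (simp add: shifted_legendre_eq_rodrigues_poly pderiv_smult power_mult_distrib flip: power_mult)

lemma shifted_legendre_quadrature_weight:
  assumes "quadrature_exact n {x. poly (shifted_legendre n) x = 0} w" "poly (shifted_legendre n) t = 0"
  shows "w t * (poly (pderiv (shifted_legendre n)) t)\<^sup>2 = (poly (shifted_legendre n) 0)\<^sup>2 / (t * (1 - t))"
proof -
  have "0 < t" "t < 1"
    using assms(2) shifted_legendre.roots_in_01[of n] by auto
  then show ?thesis
    using shifted_legendre.quadrature_weight_eq[OF assms(1), of t] assms(2) shifted_legendre_sq_1_eq_sq_0[of n]
    by (simp add: field_simps)
qed

section \<open>Bias distributions as quadrature rules\<close>

(* The probability of one fixed sequence of l flips with x heads, as a polynomial in the bias. *)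
definition outcome_poly :: "nat \<Rightarrow> nat \<Rightarrow> real poly" where
  "outcome_poly l x = [:0, 1:] ^ x * [:1, -1:] ^ (l - x)"

lemma poly_pderiv_outcome_poly:
  assumes "x = Suc a" "l - x = Suc b"
  shows "poly (pderiv (outcome_poly l x)) p =
    p ^ a * (1 - p) ^ b * (real (Suc a) * (1 - p) - real (Suc b) * p)"
proof -
  have b: "l - Suc a = Suc b"
    using assms by simp
  show ?thesis
    unfolding outcome_poly_def assms(1) b pderiv_mult pderiv_power_Suc
    by (simp add: pderiv_pCons algebra_simps)
qed

lemma poly_outcome_poly_0_1:
  assumes "1 \<le> x" "x < l"
  shows "poly (outcome_poly l x) 0 = 0" "poly (outcome_poly l x) 1 = 0"
  using assms by (simp_all add: outcome_poly_def zero_power)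

lemma degree_outcome_poly: "x \<le> l \<Longrightarrow> degree (outcome_poly l x) = l"
  by (simp add: outcome_poly_def degree_mult_eq degree_power_eq)

lemma mult_sqrt_divide:
  fixes p q :: real
  assumes "0 < p" "0 \<le> q"
  shows "p * sqrt (q / p) = sqrt (p * q)"
proof -
  have "p * q = p\<^sup>2 * (q / p)"
    using assms by (simp add: power2_eq_square)
  then have "sqrt (p * q) = sqrt (p\<^sup>2) * sqrt (q / p)"
    using real_sqrt_mult[of "p\<^sup>2" "q / p"] by simp
  then show ?thesis
    using assms by simp
qed

lemma f_bias_eq_pderiv_outcome_poly:
  assumes p: "0 < p" "p < 1" and x: "1 \<le> x" "x < l"
  shows "f_bias l x p = sqrt (p * (1 - p)) * poly (pderiv (outcome_poly l x)) p"
proof -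
  define a where "a = x - 1"
  define b where "b = l - x - 1"
  have a: "x = Suc a" and b: "l - Suc a = Suc b"
    using x unfolding a_def b_def by arith+
  have sigma_p: "p * sigma_b p = sqrt (p * (1 - p))"
    using p by (simp add: sigma_b_def mult_sqrt_divide)
  have sigma_1_p: "(1 - p) * sigma_b (1 - p) = sqrt (p * (1 - p))"
    using p by (simp add: sigma_b_def mult_sqrt_divide mult.commute)
  have "f_bias l x p = p ^ a * (1 - p) ^ b *
      (real (Suc a) * (1 - p) * (p * sigma_b p) - real (Suc b) * p * ((1 - p) * sigma_b (1 - p)))"
    unfolding f_bias_def a b by (simp add: algebra_simps)
  also have "\<dots> = sqrt (p * (1 - p)) * poly (pderiv (outcome_poly l x)) p"
    unfolding sigma_p sigma_1_p poly_pderiv_outcome_poly[OF a b[folded a]] by (simp add: algebra_simps)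
  finally show ?thesis .
qed

lemma f_bias_reflect: "x \<le> l \<Longrightarrow> f_bias l x (1 - p) = - f_bias l (l - x) p"
  unfolding f_bias_def by (simp add: algebra_simps of_nat_diff)

lemma finite_bias_distributionD:
  assumes "finite_bias_distribution P"
  shows "finite (set_pmf P)" "a \<in> set_pmf P \<Longrightarrow> 0 < a" "a \<in> set_pmf P \<Longrightarrow> a < 1"
    and "pmf P (1 - a) = pmf P a"
  using assms by (auto simp: finite_bias_distribution_def)

lemma expectation_finite_bias_distribution:
  assumes "finite_bias_distribution P"
  shows "measure_pmf.expectation P f = (\<Sum>a\<in>set_pmf P. f a * pmf P a)"
  using assms by (intro integral_measure_pmf_real) (auto simp: finite_bias_distribution_def)

lemma finite_bias_distribution_sum_reflect:
  assumes "finite_bias_distribution P"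
  shows "(\<Sum>a\<in>set_pmf P. g a) = (\<Sum>a\<in>set_pmf P. g (1 - a))"
proof -
  have "1 - a \<in> set_pmf P \<longleftrightarrow> a \<in> set_pmf P" for a
    using finite_bias_distributionD(4)[OF assms, of a] by (simp add: set_pmf_iff)
  then show ?thesis
    by (intro sum.reindex_bij_witness[of _ "\<lambda>a. 1 - a" "\<lambda>a. 1 - a"]) auto
qed

lemma expectation_f_bias_reflect:
  assumes "finite_bias_distribution P" "x \<le> l"
  shows "measure_pmf.expectation P (f_bias l x) = - measure_pmf.expectation P (f_bias l (l - x))"
proof -
  have "measure_pmf.expectation P (f_bias l x) = (\<Sum>a\<in>set_pmf P. f_bias l x a * pmf P a)"
    using assms(1) by (rule expectation_finite_bias_distribution)
  also have "\<dots> = (\<Sum>a\<in>set_pmf P. f_bias l x (1 - a) * pmf P (1 - a))"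
    using assms(1) by (rule finite_bias_distribution_sum_reflect)
  also have "\<dots> = - (\<Sum>a\<in>set_pmf P. f_bias l (l - x) a * pmf P a)"
    using assms by (simp add: f_bias_reflect finite_bias_distributionD(4) flip: sum_negf)
  finally show ?thesis
    using assms(1) by (simp add: expectation_finite_bias_distribution)
qed

(* The positive parts R_{l,x} all vanish iff the expectations do, since E f_{l,x} = - E f_{l,l-x}. *)
lemma indistinguishable_iff_expectations_vanish:
  assumes "finite_bias_distribution P"
  shows "indistinguishable c P \<longleftrightarrow>
    (\<forall>l x. 2 \<le> l \<longrightarrow> l \<le> c \<longrightarrow> 1 \<le> x \<longrightarrow> x < l \<longrightarrow> measure_pmf.expectation P (f_bias l x) = 0)"
proof
  assume indist: "indistinguishable c P"
  have nonpos: "measure_pmf.expectation P (f_bias l x) \<le> 0"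
    if "2 \<le> l" "l \<le> c" "1 \<le> x" "x < l" for l x
  proof -
    have "(\<Sum>y = 1..l - 1. real (l choose y) * R_bias P l y) = 0"
      using indist that unfolding indistinguishable_def by blast
    then have "\<forall>y\<in>{1..l - 1}. real (l choose y) * R_bias P l y = 0"
      by (subst (asm) sum_nonneg_eq_0_iff) (auto simp: R_bias_def)
    moreover have "x \<in> {1..l - 1}"
      using that by auto
    ultimately have "real (l choose x) * R_bias P l x = 0"
      by blast
    then show ?thesis
      using that by (simp add: R_bias_def)
  qed
  show "\<forall>l x. 2 \<le> l \<longrightarrow> l \<le> c \<longrightarrow> 1 \<le> x \<longrightarrow> x < l \<longrightarrow> measure_pmf.expectation P (f_bias l x) = 0"
  proof (intro allI impI)
    fix l x
    assume "2 \<le> l" "l \<le> c" "1 \<le> x" "x < l"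
    then show "measure_pmf.expectation P (f_bias l x) = 0"
      using nonpos[of l x] nonpos[of l "l - x"] expectation_f_bias_reflect[OF assms, of x l] by simp
  qed
next
  assume "\<forall>l x. 2 \<le> l \<longrightarrow> l \<le> c \<longrightarrow> 1 \<le> x \<longrightarrow> x < l \<longrightarrow> measure_pmf.expectation P (f_bias l x) = 0"
  then show "indistinguishable c P"
    unfolding indistinguishable_def R_bias_def by (auto intro!: sum.neutral)
qed

definition bias_weight :: "real pmf \<Rightarrow> real \<Rightarrow> real" where
  "bias_weight P a = pmf P a * sqrt (a * (1 - a))"

lemma bias_weight_pos:
  assumes "finite_bias_distribution P" "a \<in> set_pmf P"
  shows "0 < bias_weight P a"
  using finite_bias_distributionD(2,3)[OF assms(1) assms(2)] assms(2)
  by (simp add: bias_weight_def pmf_positive)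

lemma expectation_f_bias_eq_sum_bias_weight:
  assumes "finite_bias_distribution P" "1 \<le> x" "x < l"
  shows "measure_pmf.expectation P (f_bias l x) =
    (\<Sum>a\<in>set_pmf P. bias_weight P a * poly (pderiv (outcome_poly l x)) a)"
  unfolding expectation_finite_bias_distribution[OF assms(1)]
proof (rule sum.cong[OF refl])
  fix a
  assume "a \<in> set_pmf P"
  then have "0 < a" "a < 1"
    using finite_bias_distributionD(2,3)[OF assms(1)] by auto
  then show "f_bias l x a * pmf P a = bias_weight P a * poly (pderiv (outcome_poly l x)) a"
    using assms(2,3) by (simp add: f_bias_eq_pderiv_outcome_poly bias_weight_def)
qed

lemma indistinguishable_bias_moments:
  assumes fb: "finite_bias_distribution P" and indist: "indistinguishable (2 * n) P" and "k < 2 * n"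
  shows "(\<Sum>a\<in>set_pmf P. bias_weight P a * a ^ k) = (\<Sum>a\<in>set_pmf P. bias_weight P a) / (real k + 1)"
  using \<open>k < 2 * n\<close>
proof (induction k)
  case 0
  then show ?case
    by simp
next
  case (Suc k)
  have "\<forall>l x. 2 \<le> l \<longrightarrow> l \<le> 2 * n \<longrightarrow> 1 \<le> x \<longrightarrow> x < l \<longrightarrow> measure_pmf.expectation P (f_bias l x) = 0"
    using indistinguishable_iff_expectations_vanish[OF fb] indist by blast
  then have "0 = measure_pmf.expectation P (f_bias (Suc (Suc k)) (Suc k))"
    using Suc.prems by simp
  also have "\<dots> = (\<Sum>a\<in>set_pmf P. bias_weight P a * (real (Suc k) * a ^ k - real (Suc (Suc k)) * a ^ Suc k))"
    unfolding expectation_f_bias_eq_sum_bias_weight[OF fb, of "Suc k" "Suc (Suc k)", simplified]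
    by (intro sum.cong refl) (simp add: poly_pderiv_outcome_poly[of _ k _ 0] algebra_simps)
  also have "\<dots> = real (Suc k) * (\<Sum>a\<in>set_pmf P. bias_weight P a * a ^ k) -
      real (Suc (Suc k)) * (\<Sum>a\<in>set_pmf P. bias_weight P a * a ^ Suc k)"
    by (simp add: sum_subtractf sum_distrib_left algebra_simps)
  finally have "real (Suc (Suc k)) * (\<Sum>a\<in>set_pmf P. bias_weight P a * a ^ Suc k) =
      real (Suc k) * (\<Sum>a\<in>set_pmf P. bias_weight P a * a ^ k)"
    by simp
  also have "\<dots> = (\<Sum>a\<in>set_pmf P. bias_weight P a)"
    using Suc by (simp add: add.commute)
  finally show ?case
    by (simp add: field_simps)
qed

lemma indistinguishable_iff_quadrature_exact:
  assumes fb: "finite_bias_distribution P"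
  shows "indistinguishable (2 * n) P \<longleftrightarrow> (\<exists>c>0. quadrature_exact n (set_pmf P) (\<lambda>a. c * bias_weight P a))"
proof
  assume indist: "indistinguishable (2 * n) P"
  define K where "K = (\<Sum>a\<in>set_pmf P. bias_weight P a)"
  have "0 < K"
    unfolding K_def using finite_bias_distributionD(1)[OF fb] set_pmf_not_empty bias_weight_pos[OF fb]
    by (rule sum_pos)
  have "quadrature_exact n (set_pmf P) (\<lambda>a. 1 / K * bias_weight P a)"
  proof (rule quadrature_exactI_moments)
    fix k
    assume "k < 2 * n"
    then have "(\<Sum>a\<in>set_pmf P. bias_weight P a * a ^ k) = K / (real k + 1)"
      unfolding K_def by (rule indistinguishable_bias_moments[OF fb indist])
    then show "(\<Sum>a\<in>set_pmf P. 1 / K * bias_weight P a * a ^ k) = 1 / (real k + 1)"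
      using \<open>0 < K\<close> by (simp flip: sum_divide_distrib)
  qed
  then show "\<exists>c>0. quadrature_exact n (set_pmf P) (\<lambda>a. c * bias_weight P a)"
    using \<open>0 < K\<close> by (intro exI[of _ "1 / K"]) simp
next
  assume "\<exists>c>0. quadrature_exact n (set_pmf P) (\<lambda>a. c * bias_weight P a)"
  then obtain c where "0 < c" and exact: "quadrature_exact n (set_pmf P) (\<lambda>a. c * bias_weight P a)"
    by blast
  show "indistinguishable (2 * n) P"
    unfolding indistinguishable_iff_expectations_vanish[OF fb]
  proof (intro allI impI)
    fix l x
    assume l: "2 \<le> l" "l \<le> 2 * n" and x: "1 \<le> x" "x < l"
    have "degree (pderiv (outcome_poly l x)) < 2 * n"
      using l x by (simp add: degree_pderiv degree_outcome_poly)
    then have "c * measure_pmf.expectation P (f_bias l x) = integral01 (pderiv (outcome_poly l x))"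
      using quadrature_exactD[OF exact]
      by (simp add: expectation_f_bias_eq_sum_bias_weight[OF fb x] sum_distrib_left mult.assoc)
    also have "\<dots> = 0"
      using poly_outcome_poly_0_1[OF x] by (simp add: integral01_pderiv)
    finally show "measure_pmf.expectation P (f_bias l x) = 0"
      using \<open>0 < c\<close> by simp
  qed
qed

section \<open>The minimal indistinguishable distribution\<close>

lemma powr_three_halves: "0 < x \<Longrightarrow> x powr (3/2) = x * sqrt (x::real)"
  using powr_add[of x 1 "1/2"] by (simp add: powr_half_sqrt)

definition pmf_of_weights :: "'a set \<Rightarrow> ('a \<Rightarrow> real) \<Rightarrow> 'a pmf" where
  "pmf_of_weights S g = embed_pmf (\<lambda>a. if a \<in> S then g a / (\<Sum>b\<in>S. g b) else 0)"

lemma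
  assumes "finite S" "S \<noteq> {}" "\<And>a. a \<in> S \<Longrightarrow> 0 < g a"
  shows pmf_pmf_of_weights: "pmf (pmf_of_weights S g) a = (if a \<in> S then g a / (\<Sum>b\<in>S. g b) else 0)"
    and set_pmf_of_weights: "set_pmf (pmf_of_weights S g) = S"
proof -
  define h where "h a = (if a \<in> S then g a / (\<Sum>b\<in>S. g b) else 0)" for a
  have "0 < (\<Sum>b\<in>S. g b)"
    using assms by (rule sum_pos)
  then have h_nonneg: "0 \<le> h a" for a
    using assms(3) by (simp add: h_def less_imp_le)
  have "(\<integral>\<^sup>+ a. ennreal (h a) \<partial>count_space UNIV) = (\<Sum>a\<in>S. ennreal (h a))"
    using assms(1) by (intro nn_integral_count_space') (auto simp: h_def)
  also have "\<dots> = ennreal (\<Sum>a\<in>S. h a)"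
    using h_nonneg by (rule sum_ennreal)
  also have "(\<Sum>a\<in>S. h a) = 1"
    using \<open>0 < (\<Sum>b\<in>S. g b)\<close> by (simp add: h_def flip: sum_divide_distrib)
  finally have h_total: "(\<integral>\<^sup>+ a. ennreal (h a) \<partial>count_space UNIV) = 1"
    by simp
  show "pmf (pmf_of_weights S g) a = (if a \<in> S then g a / (\<Sum>b\<in>S. g b) else 0)"
    using pmf_embed_pmf[OF h_nonneg h_total] by (simp add: pmf_of_weights_def h_def[abs_def])
  show "set_pmf (pmf_of_weights S g) = S"
    using set_embed_pmf[OF h_nonneg h_total] assms(3) \<open>0 < (\<Sum>b\<in>S. g b)\<close>
    by (force simp: pmf_of_weights_def h_def[abs_def])
qed

lemma pmf_eqI_proportional:
  assumes "set_pmf P = set_pmf Q" "finite (set_pmf P)"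
    and "\<And>x. x \<in> set_pmf P \<Longrightarrow> pmf P x = C * h x" "\<And>x. x \<in> set_pmf Q \<Longrightarrow> pmf Q x = D * h x"
  shows "P = Q"
proof -
  have "C * (\<Sum>x\<in>set_pmf P. h x) = 1"
    using sum_pmf_eq_1[OF assms(2), of P] assms(3) by (simp add: sum_distrib_left)
  moreover have "D * (\<Sum>x\<in>set_pmf P. h x) = 1"
    using sum_pmf_eq_1[OF assms(2), of Q] assms(1,4) by (simp add: sum_distrib_left)
  ultimately have "C = D"
    by (metis mult_cancel_right mult_zero_left zero_neq_one)
  show ?thesis
  proof (rule pmf_eqI)
    fix x
    show "pmf P x = pmf Q x"
    proof (cases "x \<in> set_pmf P")
      case True
      then show ?thesis
        using assms \<open>C = D\<close> by simp
    next
      case False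
      moreover have "x \<notin> set_pmf Q"
        using False assms(1) by simp
      ultimately show ?thesis
        by (simp add: set_pmf_iff)
    qed
  qed
qed

definition legendre_weight :: "nat \<Rightarrow> real \<Rightarrow> real" where
  "legendre_weight n p = 1 / ((p * (1 - p)) powr (3/2) * (poly (pderiv (shifted_legendre n)) p)\<^sup>2)"

definition legendre_bias_distribution :: "nat \<Rightarrow> real pmf" where
  "legendre_bias_distribution n = pmf_of_weights (shifted_legendre.roots n) (legendre_weight n)"

lemma legendre_weight_pos: "p \<in> shifted_legendre.roots n \<Longrightarrow> 0 < legendre_weight n p"
  using shifted_legendre.roots_in_01[of n] shifted_legendre.poly_pderiv_L_nonzero[of p n]
  by (auto simp: legendre_weight_def)

lemma shifted_legendre_roots_nonempty:
  assumes "1 \<le> n"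
  shows "shifted_legendre.roots n \<noteq> {}"
proof
  assume "shifted_legendre.roots n = {}"
  then show False
    using shifted_legendre.card_roots[of n] assms by simp
qed

lemma
  assumes "1 \<le> n"
  shows set_pmf_legendre_bias_distribution: "set_pmf (legendre_bias_distribution n) = shifted_legendre.roots n"
    and pmf_legendre_bias_distribution: "pmf (legendre_bias_distribution n) p =
      (if p \<in> shifted_legendre.roots n
       then legendre_weight n p / (\<Sum>q\<in>shifted_legendre.roots n. legendre_weight n q) else 0)"
proof -
  note weights = shifted_legendre.finite_roots[of n] shifted_legendre_roots_nonempty[OF assms]
    legendre_weight_pos[of _ n]
  show "set_pmf (legendre_bias_distribution n) = shifted_legendre.roots n"
    unfolding legendre_bias_distribution_def by (rule set_pmf_of_weights[OF weights])
  show "pmf (legendre_bias_distribution n) p =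
      (if p \<in> shifted_legendre.roots n
       then legendre_weight n p / (\<Sum>q\<in>shifted_legendre.roots n. legendre_weight n q) else 0)"
    unfolding legendre_bias_distribution_def by (rule pmf_pmf_of_weights[OF weights])
qed

lemma finite_bias_distribution_legendre:
  assumes "1 \<le> n"
  shows "finite_bias_distribution (legendre_bias_distribution n)"
  unfolding finite_bias_distribution_def
proof (intro conjI allI)
  show "finite (set_pmf (legendre_bias_distribution n))"
    "set_pmf (legendre_bias_distribution n) \<subseteq> {0<..<1}"
    using shifted_legendre.finite_roots[of n] shifted_legendre.roots_in_01[of n]
    by (simp_all add: set_pmf_legendre_bias_distribution[OF assms])
  show "pmf (legendre_bias_distribution n) a = pmf (legendre_bias_distribution n) (1 - a)" for a
    using shifted_legendre_root_reflect[of n a] pderiv_shifted_legendre_sq_reflect[of n a]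
    by (simp add: pmf_legendre_bias_distribution[OF assms] legendre_weight_def mult.commute)
qed

lemma indistinguishable_legendre:
  assumes "1 \<le> n"
  shows "indistinguishable (2 * n) (legendre_bias_distribution n)"
proof -
  define Z where "Z = (\<Sum>q\<in>shifted_legendre.roots n. legendre_weight n q)"
  define c where "c = Z * (poly (shifted_legendre n) 0)\<^sup>2"
  have "0 < Z"
    unfolding Z_def using shifted_legendre.finite_roots shifted_legendre_roots_nonempty[OF assms]
    by (rule sum_pos) (rule legendre_weight_pos)
  then have "0 < c"
    using shifted_legendre.poly_L_0_nonzero[of n] by (simp add: c_def)
  have "shifted_legendre.gauss_weight n p = c * bias_weight (legendre_bias_distribution n) p"
    if p: "p \<in> shifted_legendre.roots n" for p
  proof -
    define u where "u = p * (1 - p)"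
    define d where "d = poly (pderiv (shifted_legendre n)) p"
    have "0 < u" "d \<noteq> 0"
      using p shifted_legendre.roots_in_01[of n] shifted_legendre.poly_pderiv_L_nonzero[of p n]
      by (auto simp: u_def d_def)
    have "shifted_legendre.gauss_weight n p * d\<^sup>2 = (poly (shifted_legendre n) 0)\<^sup>2 / u"
      using shifted_legendre_quadrature_weight[OF shifted_legendre.quadrature_exact_gauss_weight[of n]] p
      by (simp add: u_def d_def)
    then have gauss_weight: "shifted_legendre.gauss_weight n p = (poly (shifted_legendre n) 0)\<^sup>2 / (u * d\<^sup>2)"
      using \<open>0 < u\<close> \<open>d \<noteq> 0\<close> by (simp add: field_simps)
    have "bias_weight (legendre_bias_distribution n) p = 1 / (u * sqrt u * d\<^sup>2) * sqrt u / Z"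
      using p \<open>0 < u\<close> unfolding u_def d_def Z_def
      by (simp add: bias_weight_def pmf_legendre_bias_distribution[OF assms] legendre_weight_def
          powr_three_halves)
    then have bias_weight: "bias_weight (legendre_bias_distribution n) p = 1 / (u * d\<^sup>2 * Z)"
      using \<open>0 < u\<close> by simp
    show ?thesis
      unfolding gauss_weight bias_weight c_def using \<open>0 < Z\<close> by simp
  qed
  then have "quadrature_exact n (set_pmf (legendre_bias_distribution n))
      (\<lambda>p. c * bias_weight (legendre_bias_distribution n) p)"
    using shifted_legendre.quadrature_exact_gauss_weight[of n]
    by (auto simp: set_pmf_legendre_bias_distribution[OF assms] intro: quadrature_exact_cong)
  with \<open>0 < c\<close> show ?thesis
    using indistinguishable_iff_quadrature_exact[OF finite_bias_distribution_legendre[OF assms]] by blast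
qed

lemma card_ge_if_indistinguishable:
  assumes "finite_bias_distribution P" "indistinguishable (2 * n) P"
  shows "n \<le> card (set_pmf P)"
proof -
  obtain c where "quadrature_exact n (set_pmf P) (\<lambda>a. c * bias_weight P a)"
    using assms indistinguishable_iff_quadrature_exact by blast
  then show ?thesis
    by (rule quadrature_exact_imp_card_ge[OF finite_bias_distributionD(1)[OF assms(1)]])
qed

lemma minimal_indist_iff:
  assumes "1 \<le> n"
  shows "minimal_indist (2 * n) P \<longleftrightarrow>
    finite_bias_distribution P \<and> indistinguishable (2 * n) P \<and> card (set_pmf P) = n"
proof
  assume "minimal_indist (2 * n) P"
  then have "finite_bias_distribution P" "indistinguishable (2 * n) P"
    and "card (set_pmf P) \<le> card (set_pmf (legendre_bias_distribution n))"
    using finite_bias_distribution_legendre[OF assms] indistinguishable_legendre[OF assms]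
    unfolding minimal_indist_def by blast+
  moreover have "card (set_pmf (legendre_bias_distribution n)) = n"
    using shifted_legendre.card_roots by (simp add: set_pmf_legendre_bias_distribution[OF assms])
  ultimately show "finite_bias_distribution P \<and> indistinguishable (2 * n) P \<and> card (set_pmf P) = n"
    using card_ge_if_indistinguishable[of P n] by simp
next
  assume "finite_bias_distribution P \<and> indistinguishable (2 * n) P \<and> card (set_pmf P) = n"
  then show "minimal_indist (2 * n) P"
    unfolding minimal_indist_def using card_ge_if_indistinguishable by auto
qed

lemma indistinguishable_card_eq_imp_legendre:
  assumes fb: "finite_bias_distribution P" and "indistinguishable (2 * n) P" "card (set_pmf P) = n"
  shows "set_pmf P = shifted_legendre.roots n \<and> (\<exists>C>0. \<forall>p\<in>set_pmf P. pmf P p = C * legendre_weight n p)"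
proof -
  obtain c where "0 < c" and exact: "quadrature_exact n (set_pmf P) (\<lambda>a. c * bias_weight P a)"
    using assms indistinguishable_iff_quadrature_exact by blast
  have support: "set_pmf P = shifted_legendre.roots n"
    using finite_bias_distributionD(1)[OF fb] \<open>card (set_pmf P) = n\<close> exact
    by (rule shifted_legendre.quadrature_nodes_eq_roots)
  have "pmf P p = (poly (shifted_legendre n) 0)\<^sup>2 / c * legendre_weight n p" if p: "p \<in> set_pmf P" for p
  proof -
    define u where "u = p * (1 - p)"
    define d where "d = poly (pderiv (shifted_legendre n)) p"
    have "0 < u" "d \<noteq> 0"
      using p support shifted_legendre.roots_in_01[of n] shifted_legendre.poly_pderiv_L_nonzero[of p n]
      by (auto simp: u_def d_def)
    have "c * (pmf P p * sqrt u) * d\<^sup>2 = (poly (shifted_legendre n) 0)\<^sup>2 / u"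
      using shifted_legendre_quadrature_weight[OF exact[unfolded support]] p support
      by (simp add: bias_weight_def u_def d_def)
    then show ?thesis
      using \<open>0 < c\<close> \<open>0 < u\<close> \<open>d \<noteq> 0\<close>
      by (simp add: legendre_weight_def powr_three_halves u_def[symmetric] d_def[symmetric] field_simps)
  qed
  moreover have "0 < (poly (shifted_legendre n) 0)\<^sup>2 / c"
    using \<open>0 < c\<close> shifted_legendre.poly_L_0_nonzero[of n] by simp
  ultimately show ?thesis
    using support by blast
qed

theorem theorem3:
  fixes \<nu> :: nat
  assumes "\<nu> \<ge> 1"
  shows "(\<exists>!P. minimal_indist (2 * \<nu>) P) \<and>
    (\<forall>P. minimal_indist (2 * \<nu>) P \<longrightarrow>
       set_pmf P = {p. poly (shifted_legendre \<nu>) p = 0} \<and>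
       (\<exists>C>0. \<forall>p\<in>set_pmf P.
          pmf P p = C / ((p * (1 - p)) powr (3/2) *
                         (poly (pderiv (shifted_legendre \<nu>)) p)\<^sup>2)) \<and>
       card (set_pmf P) = \<nu>)"
proof -
  have legendre: "set_pmf P = {p. poly (shifted_legendre \<nu>) p = 0} \<and>
      (\<exists>C>0. \<forall>p\<in>set_pmf P. pmf P p = C * legendre_weight \<nu> p) \<and> card (set_pmf P) = \<nu>"
    if "minimal_indist (2 * \<nu>) P" for P
    using that indistinguishable_card_eq_imp_legendre minimal_indist_iff[OF assms] by blast
  have "minimal_indist (2 * \<nu>) (legendre_bias_distribution \<nu>)"
    using finite_bias_distribution_legendre[OF assms] indistinguishable_legendre[OF assms]
      shifted_legendre.card_roots
    by (simp add: minimal_indist_iff[OF assms] set_pmf_legendre_bias_distribution[OF assms])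
  moreover have "P = Q" if P: "minimal_indist (2 * \<nu>) P" and Q: "minimal_indist (2 * \<nu>) Q" for P Q
  proof -
    obtain C D where "\<forall>p\<in>set_pmf P. pmf P p = C * legendre_weight \<nu> p"
      and "\<forall>p\<in>set_pmf Q. pmf Q p = D * legendre_weight \<nu> p"
      using legendre[OF P] legendre[OF Q] by blast
    moreover have "set_pmf P = set_pmf Q" "finite (set_pmf P)"
      using legendre[OF P] legendre[OF Q] shifted_legendre.finite_roots by simp_all
    ultimately show "P = Q"
      by (intro pmf_eqI_proportional[of P Q C "legendre_weight \<nu>" D]) simp_all
  qed
  moreover have "\<exists>C>0. \<forall>p\<in>set_pmf P. pmf P p =
      C / ((p * (1 - p)) powr (3/2) * (poly (pderiv (shifted_legendre \<nu>)) p)\<^sup>2)"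
    if P: "minimal_indist (2 * \<nu>) P" for P
  proof -
    obtain C where "0 < C" "\<forall>p\<in>set_pmf P. pmf P p = C * legendre_weight \<nu> p"
      using legendre[OF P] by blast
    then show ?thesis
      by (intro exI[of _ C]) (simp add: legendre_weight_def)
  qed
  ultimately show ?thesis
    using legendre by blast
qed

end
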